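(* Let $P\in\mathbb{N}_0^{n\times n}$ be an incidence matrix that exclusively represents irreducible morphisms (resp. exclusively represents reducible morphisms), and let $1\leq i,j\leq n$. Then the matrix obtained from $P$ by swapping its $i$-th and $j$-th rows, and the matrix obtained from $P$ by swapping its $i$-th and $j$-th columns, also exclusively represent irreducible morphisms (resp. reducible morphisms).
   Context: Let $\Sigma=\{a_1,\dots,a_n\}$. A morphism $\varphi:\Sigma^+\to\Sigma^+$ (non-empty images) is Parikh-positive if every letter occurs in $\varphi(a_1)\cdots\varphi(a_n)$. Its incidence matrix is $P(\varphi)=(m_{i,j})$ with $m_{i,j}=|\varphi(a_j)|_{a_i}$. An incidence matrix is any square non-negative integer matrix; throughout, the incidence matrices considered have no zero rows or columns. An automorphism is an injective morphism mapping each letter to a single letter; a morphism is reducible if it equals $\psi_2\circ\psi_1$ with neither $\psi_1,\psi_2$ an automorphism, irreducible otherwise. An incidence matrix $P$ exclusively represents irreducible (resp. reducible) morphisms if every Parikh-positive morphism $\varphi$ with $P(\varphi)=P$ is irreducible (resp. reducible). *)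

theory Defs
  imports "Jordan_Normal_Form.Column_Operations"
begin

text \<open>Alphabet \<Sigma> = {a_1,...,a_n} is encoded as the letters 0,...,n-1 (type nat);
  words are lists of letters; a morphism is given by the images of the letters
  (only the values on letters a < n matter).\<close>

definition is_morphism :: "nat \<Rightarrow> (nat \<Rightarrow> nat list) \<Rightarrow> bool" where
  "is_morphism n \<phi> \<longleftrightarrow> (\<forall>a<n. \<phi> a \<noteq> [] \<and> set (\<phi> a) \<subseteq> {..<n})"

definition parikh_positive :: "nat \<Rightarrow> (nat \<Rightarrow> nat list) \<Rightarrow> bool" where
  "parikh_positive n \<phi> \<longleftrightarrow> (\<forall>b<n. b \<in> set (concat (map \<phi> [0..<n])))"

definition incidence_matrix :: "nat \<Rightarrow> (nat \<Rightarrow> nat list) \<Rightarrow> nat mat" where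
  "incidence_matrix n \<phi> = mat n n (\<lambda>(i, j). count_list (\<phi> j) i)"

definition morph_comp :: "(nat \<Rightarrow> nat list) \<Rightarrow> (nat \<Rightarrow> nat list) \<Rightarrow> (nat \<Rightarrow> nat list)" where
  "morph_comp \<psi>2 \<psi>1 = (\<lambda>a. concat (map \<psi>2 (\<psi>1 a)))"

definition is_automorphism :: "nat \<Rightarrow> (nat \<Rightarrow> nat list) \<Rightarrow> bool" where
  "is_automorphism n \<phi> \<longleftrightarrow> is_morphism n \<phi> \<and> (\<forall>a<n. length (\<phi> a) = 1)
     \<and> inj_on (\<lambda>a. hd (\<phi> a)) {..<n}"

definition reducible :: "nat \<Rightarrow> (nat \<Rightarrow> nat list) \<Rightarrow> bool" where
  "reducible n \<phi> \<longleftrightarrow> (\<exists>\<psi>1 \<psi>2. is_morphism n \<psi>1 \<and> is_morphism n \<psi>2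
     \<and> \<not> is_automorphism n \<psi>1 \<and> \<not> is_automorphism n \<psi>2
     \<and> (\<forall>a<n. \<phi> a = morph_comp \<psi>2 \<psi>1 a))"

definition irreducible_morph :: "nat \<Rightarrow> (nat \<Rightarrow> nat list) \<Rightarrow> bool" where
  "irreducible_morph n \<phi> \<longleftrightarrow> \<not> reducible n \<phi>"

definition excl_irreducible :: "nat \<Rightarrow> nat mat \<Rightarrow> bool" where
  "excl_irreducible n P \<longleftrightarrow> (\<forall>\<phi>. is_morphism n \<phi> \<and> parikh_positive n \<phi>
      \<and> incidence_matrix n \<phi> = P \<longrightarrow> irreducible_morph n \<phi>)"

definition excl_reducible :: "nat \<Rightarrow> nat mat \<Rightarrow> bool" where
  "excl_reducible n P \<longleftrightarrow> (\<forall>\<phi>. is_morphism n \<phi> \<and> parikh_positive n \<phi>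
      \<and> incidence_matrix n \<phi> = P \<longrightarrow> reducible n \<phi>)"

end

theory Submission
  imports Defs "HOL-Combinatorics.Transposition"
begin

text \<open>Swapping rows i and j of the incidence matrix amounts to renaming the letters of
  all images by the transposition (i j), i.e. composing with an automorphism on the left;
  swapping columns i and j amounts to composing with the same automorphism on the right.
  Composition with an automorphism preserves both Parikh-positivity and reducibility,
  and since the transposition is an involution it reflects them as well.\<close>

definition represents :: "nat \<Rightarrow> nat mat \<Rightarrow> (nat \<Rightarrow> nat list) \<Rightarrow> bool" where
  "represents n P \<phi> \<longleftrightarrow> is_morphism n \<phi> \<and> parikh_positive n \<phi> \<and> incidence_matrix n \<phi> = P"

lemma exclusive_transfer:
  assumes "\<And>\<phi>. represents n Q \<phi> \<Longrightarrow> represents n P (T \<phi>)"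
    and "\<And>\<phi>. represents n Q \<phi> \<Longrightarrow> reducible n (T \<phi>) \<longleftrightarrow> reducible n \<phi>"
  shows "(excl_irreducible n P \<longrightarrow> excl_irreducible n Q)
       \<and> (excl_reducible n P \<longrightarrow> excl_reducible n Q)"
  using assms unfolding excl_irreducible_def excl_reducible_def irreducible_morph_def
    represents_def[symmetric] by blast

lemma is_morphism_map_letters:
  assumes "is_morphism n \<phi>" "\<tau> ` {..<n} \<subseteq> {..<n}"
  shows "is_morphism n (\<lambda>a. map \<tau> (\<phi> a))"
  using assms by (fastforce simp: is_morphism_def)

lemma is_morphism_comp_letters:
  assumes "is_morphism n \<phi>" "\<tau> ` {..<n} \<subseteq> {..<n}"
  shows "is_morphism n (\<phi> \<circ> \<tau>)"
  using assms by (auto simp: is_morphism_def)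

lemma is_automorphism_map_lettersD:
  assumes "is_morphism n \<psi>" "is_automorphism n (\<lambda>a. map \<tau> (\<psi> a))"
  shows "is_automorphism n \<psi>"
proof -
  have len: "\<forall>a<n. length (\<psi> a) = 1"
    using assms(2) by (simp add: is_automorphism_def)
  then have hd_image: "hd (map \<tau> (\<psi> a)) = \<tau> (hd (\<psi> a))" if "a < n" for a
    using that by (metis hd_map length_0_conv zero_neq_one)
  have "inj_on (\<lambda>a. hd (map \<tau> (\<psi> a))) {..<n}"
    using assms(2) by (simp add: is_automorphism_def)
  then have "inj_on (\<lambda>a. hd (\<psi> a)) {..<n}"
    by (auto simp: inj_on_def hd_image)
  with assms(1) len show ?thesis
    by (simp add: is_automorphism_def)
qed

lemma is_automorphism_comp_lettersD:
  assumes "is_morphism n \<psi>" "is_automorphism n (\<psi> \<circ> \<tau>)" "\<tau> ` {..<n} = {..<n}"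
  shows "is_automorphism n \<psi>"
proof -
  have "length (\<psi> c) = 1" if "c < n" for c
  proof -
    have "c \<in> \<tau> ` {..<n}"
      using that assms(3) by simp
    then obtain a where "a < n" "c = \<tau> a"
      by auto
    then show ?thesis
      using assms(2) by (simp add: is_automorphism_def)
  qed
  moreover have "inj_on (\<lambda>a. hd (\<psi> a)) (\<tau> ` {..<n})"
    using assms(2) by (auto simp: is_automorphism_def inj_on_def)
  ultimately show ?thesis
    using assms(1,3) by (simp add: is_automorphism_def)
qed

lemma reducible_map_letters:
  assumes "reducible n \<phi>" "\<tau> ` {..<n} \<subseteq> {..<n}"
  shows "reducible n (\<lambda>a. map \<tau> (\<phi> a))"
proof -
  obtain \<psi>1 \<psi>2 where \<psi>: "is_morphism n \<psi>1" "is_morphism n \<psi>2"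
      "\<not> is_automorphism n \<psi>1" "\<not> is_automorphism n \<psi>2"
      "\<forall>a<n. \<phi> a = morph_comp \<psi>2 \<psi>1 a"
    using assms(1) unfolding reducible_def by blast
  let ?\<psi>2 = "\<lambda>b. map \<tau> (\<psi>2 b)"
  have "is_morphism n ?\<psi>2"
    using is_morphism_map_letters[OF \<psi>(2) assms(2)] .
  moreover have "\<not> is_automorphism n ?\<psi>2"
    using is_automorphism_map_lettersD[OF \<psi>(2)] \<psi>(4) by blast
  moreover have "\<forall>a<n. map \<tau> (\<phi> a) = morph_comp ?\<psi>2 \<psi>1 a"
    using \<psi>(5) by (simp add: morph_comp_def map_concat comp_def)
  ultimately show ?thesis
    using \<psi>(1,3) unfolding reducible_def by blast
qed

lemma reducible_comp_letters:
  assumes "reducible n \<phi>" "\<tau> ` {..<n} = {..<n}"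
  shows "reducible n (\<phi> \<circ> \<tau>)"
proof -
  obtain \<psi>1 \<psi>2 where \<psi>: "is_morphism n \<psi>1" "is_morphism n \<psi>2"
      "\<not> is_automorphism n \<psi>1" "\<not> is_automorphism n \<psi>2"
      "\<forall>a<n. \<phi> a = morph_comp \<psi>2 \<psi>1 a"
    using assms(1) unfolding reducible_def by blast
  have "is_morphism n (\<psi>1 \<circ> \<tau>)"
    using is_morphism_comp_letters[OF \<psi>(1)] assms(2) by simp
  moreover have "\<not> is_automorphism n (\<psi>1 \<circ> \<tau>)"
    using is_automorphism_comp_lettersD[OF \<psi>(1) _ assms(2)] \<psi>(3) by blast
  moreover have "\<forall>a<n. (\<phi> \<circ> \<tau>) a = morph_comp \<psi>2 (\<psi>1 \<circ> \<tau>) a"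
    using \<psi>(5) assms(2) by (auto simp: morph_comp_def)
  ultimately show ?thesis
    using \<psi>(2,4) unfolding reducible_def by blast
qed

lemma parikh_positive_iff: "parikh_positive n \<phi> \<longleftrightarrow> {..<n} \<subseteq> (\<Union>a<n. set (\<phi> a))"
  by (auto simp: parikh_positive_def atLeast0LessThan)

lemma parikh_positive_map_letters:
  assumes "parikh_positive n \<phi>" "\<tau> ` {..<n} = {..<n}"
  shows "parikh_positive n (\<lambda>a. map \<tau> (\<phi> a))"
proof -
  have "{..<n} \<subseteq> \<tau> ` (\<Union>a<n. set (\<phi> a))"
    using assms by (metis image_mono parikh_positive_iff)
  then show ?thesis
    by (simp add: parikh_positive_iff image_UN)
qed

lemma parikh_positive_comp_letters:
  assumes "parikh_positive n \<phi>" "\<tau> ` {..<n} = {..<n}"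
  shows "parikh_positive n (\<phi> \<circ> \<tau>)"
proof -
  have "(\<Union>a<n. set ((\<phi> \<circ> \<tau>) a)) = (\<Union>c\<in>\<tau> ` {..<n}. set (\<phi> c))"
    by simp
  then show ?thesis
    using assms by (simp add: parikh_positive_iff)
qed

lemma incidence_matrix_map_transpose:
  assumes "i < n" "j < n"
  shows "incidence_matrix n (\<lambda>a. map (transpose i j) (\<phi> a))
       = swaprows i j (incidence_matrix n \<phi>)"
proof -
  have "count_list (map (transpose i j) w) r = count_list w (transpose i j r)" for w r
    using count_list_map_conv[OF inj_transpose, of i j w "transpose i j r"] by simp
  then show ?thesis
    using assms by (intro eq_matI) (auto simp: incidence_matrix_def transpose_def)
qed

lemma incidence_matrix_comp_transpose:
  assumes "i < n" "j < n"
  shows "incidence_matrix n (\<phi> \<circ> transpose i j) = swapcols i j (incidence_matrix n \<phi>)"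
  using assms by (intro eq_matI) (auto simp: incidence_matrix_def transpose_def)

lemma swaprows_swaprows:
  "i < dim_row A \<Longrightarrow> j < dim_row A \<Longrightarrow> swaprows i j (swaprows i j A) = A"
  by (intro eq_matI) auto

lemma swapcols_swapcols:
  "i < dim_col A \<Longrightarrow> j < dim_col A \<Longrightarrow> swapcols i j (swapcols i j A) = A"
  by (intro eq_matI) auto

lemma exclusive_swaprows:
  assumes "P \<in> carrier_mat n n" "i < n" "j < n"
  shows "(excl_irreducible n P \<longrightarrow> excl_irreducible n (swaprows i j P))
       \<and> (excl_reducible n P \<longrightarrow> excl_reducible n (swaprows i j P))"
proof (rule exclusive_transfer)
  let ?T = "\<lambda>\<phi> a. map (transpose i j) (\<phi> a)"
  have \<tau>: "transpose i j ` {..<n} = {..<n}"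
    using assms(2,3) by simp
  fix \<phi> assume "represents n (swaprows i j P) \<phi>"
  then show "represents n P (?T \<phi>)"
    using assms \<tau> is_morphism_map_letters parikh_positive_map_letters
    by (auto simp: represents_def incidence_matrix_map_transpose swaprows_swaprows)
  have "?T (?T \<phi>) = \<phi>"
    by (simp add: comp_def)
  then show "reducible n (?T \<phi>) \<longleftrightarrow> reducible n \<phi>"
    using \<tau> reducible_map_letters[of n _ "transpose i j"] by (metis order_refl)
qed

lemma exclusive_swapcols:
  assumes "P \<in> carrier_mat n n" "i < n" "j < n"
  shows "(excl_irreducible n P \<longrightarrow> excl_irreducible n (swapcols i j P))
       \<and> (excl_reducible n P \<longrightarrow> excl_reducible n (swapcols i j P))"
proof (rule exclusive_transfer)
  let ?T = "\<lambda>\<phi>. \<phi> \<circ> transpose i j"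
  have \<tau>: "transpose i j ` {..<n} = {..<n}"
    using assms(2,3) by simp
  fix \<phi> assume "represents n (swapcols i j P) \<phi>"
  then show "represents n P (?T \<phi>)"
    using assms \<tau> is_morphism_comp_letters parikh_positive_comp_letters
    by (auto simp: represents_def incidence_matrix_comp_transpose swapcols_swapcols)
  have "?T (?T \<phi>) = \<phi>"
    by (simp add: comp_assoc)
  then show "reducible n (?T \<phi>) \<longleftrightarrow> reducible n \<phi>"
    using \<tau> reducible_comp_letters[of n _ "transpose i j"] by metis
qed

theorem proposition18:
  fixes P :: "nat mat" and n i j :: nat
  assumes "P \<in> carrier_mat n n"
    and "\<forall>r<n. \<exists>c<n. P $$ (r, c) \<noteq> 0"
    and "\<forall>c<n. \<exists>r<n. P $$ (r, c) \<noteq> 0"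
    and "i < n" and "j < n"
  shows "(excl_irreducible n P \<longrightarrow>
            excl_irreducible n (swaprows i j P) \<and> excl_irreducible n (swapcols i j P))
       \<and> (excl_reducible n P \<longrightarrow>
            excl_reducible n (swaprows i j P) \<and> excl_reducible n (swapcols i j P))"
  using exclusive_swaprows[OF assms(1,4,5)] exclusive_swapcols[OF assms(1,4,5)] by blast

end
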